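(* A nontrivial commutative ring $A$ is an integral domain if and only if $A$ is the only nonzero ideal of $A$ that is also a factroid of $A$.
   Context: A factroid of $A$ is an additive subgroup $F$ of $A$ such that for all $a\in A$ and every nonzerodivisor $b$ of $A$, $ba\in F$ implies $a\in F$. *)

theory Defs
  imports "HOL-Algebra.Algebra"
begin

definition nonzerodivisor :: "('a, 'b) ring_scheme \<Rightarrow> 'a \<Rightarrow> bool" where
  "nonzerodivisor R b \<longleftrightarrow> b \<in> carrier R \<and>
     (\<forall>a \<in> carrier R. b \<otimes>\<^bsub>R\<^esub> a = \<zero>\<^bsub>R\<^esub> \<longrightarrow> a = \<zero>\<^bsub>R\<^esub>)"

definition factroid :: "('a, 'b) ring_scheme \<Rightarrow> 'a set \<Rightarrow> bool" where
  "factroid R F \<longleftrightarrow> additive_subgroup F R \<and>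
     (\<forall>a \<in> carrier R. \<forall>b. nonzerodivisor R b \<longrightarrow> b \<otimes>\<^bsub>R\<^esub> a \<in> F \<longrightarrow> a \<in> F)"

end

theory Submission
  imports Defs
begin

text \<open>A nonzerodivisor b lying in a factroid ideal I gives 1 \<in> I, since b \<otimes> 1 \<in> I;
  in a domain every nonzero element is a nonzerodivisor, so the only nonzero factroid ideal
  is the whole ring. Conversely, the annihilator of any element b is always a factroid ideal,
  as c \<otimes> x \<otimes> b = 0 with c a nonzerodivisor forces x \<otimes> b = 0. If the whole ring is the
  only nonzero one, then every b \<noteq> 0 has zero annihilator, i.e. there are no zero divisors.\<close>

definition annihilator :: "('a, 'b) ring_scheme \<Rightarrow> 'a \<Rightarrow> 'a set" where
  "annihilator R b = {x \<in> carrier R. b \<otimes>\<^bsub>R\<^esub> x = \<zero>\<^bsub>R\<^esub>}"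

lemma (in cring) annihilator_ideal:
  assumes "b \<in> carrier R"
  shows "ideal (annihilator R b) R"
  using ideal.helper_max_prime[OF zeroideal is_cring assms]
  by (simp add: annihilator_def)

lemma (in cring) annihilator_factroid:
  assumes b: "b \<in> carrier R"
  shows "factroid R (annihilator R b)"
  unfolding factroid_def
proof (intro conjI ballI allI impI)
  show "additive_subgroup (annihilator R b) R"
    using annihilator_ideal[OF b] by (rule ideal.axioms(1))
next
  fix x c
  assume x: "x \<in> carrier R" and c: "nonzerodivisor R c"
    and cx: "c \<otimes> x \<in> annihilator R b"
  have "c \<in> carrier R"
    using c by (simp add: nonzerodivisor_def)
  then have "c \<otimes> (b \<otimes> x) = \<zero>"
    using cx x b by (simp add: annihilator_def m_lcomm)
  then have "b \<otimes> x = \<zero>"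
    using c x b by (simp add: nonzerodivisor_def)
  then show "x \<in> annihilator R b"
    using x by (simp add: annihilator_def)
qed

lemma (in ring) annihilator_eq_carrier_iff:
  assumes "b \<in> carrier R"
  shows "annihilator R b = carrier R \<longleftrightarrow> b = \<zero>"
proof
  assume "annihilator R b = carrier R"
  then have "b \<otimes> \<one> = \<zero>"
    using one_closed unfolding annihilator_def by blast
  then show "b = \<zero>"
    using assms by simp
qed (auto simp: annihilator_def)

lemma (in ring) carrier_factroid: "factroid R (carrier R)"
  using ideal.axioms(1)[OF oneideal] by (simp add: factroid_def)

lemma (in ring) factroid_ideal_eq_carrier_if_nonzerodivisor:
  assumes "ideal I R" "factroid R I" "b \<in> I" "nonzerodivisor R b"
  shows "I = carrier R"
proof (rule ideal.one_imp_carrier[OF \<open>ideal I R\<close>])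
  have "b \<otimes> \<one> \<in> I"
    using ideal.I_r_closed[OF \<open>ideal I R\<close> \<open>b \<in> I\<close> one_closed] .
  then show "\<one> \<in> I"
    using assms(2,4) by (simp add: factroid_def)
qed

lemma (in domain) nonzerodivisorI:
  assumes "a \<in> carrier R" "a \<noteq> \<zero>"
  shows "nonzerodivisor R a"
  using assms by (auto simp: nonzerodivisor_def integral_iff)

lemma (in domain) nonzero_factroid_ideal_eq_carrier:
  assumes "ideal I R" "I \<noteq> {\<zero>}" "factroid R I"
  shows "I = carrier R"
proof -
  obtain b where "b \<in> I" "b \<noteq> \<zero>"
    using assms(1,2) additive_subgroup.zero_closed[OF ideal.axioms(1)] by blast
  then have "nonzerodivisor R b"
    using ideal.Icarr[OF assms(1)] by (simp add: nonzerodivisorI)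
  then show ?thesis
    using factroid_ideal_eq_carrier_if_nonzerodivisor assms(1,3) \<open>b \<in> I\<close> by blast
qed

lemma (in cring) domain_if_nonzero_factroid_ideals_eq_carrier:
  assumes "\<one> \<noteq> \<zero>"
    and carrier_only: "\<And>I. \<lbrakk>ideal I R; I \<noteq> {\<zero>}; factroid R I\<rbrakk> \<Longrightarrow> I = carrier R"
  shows "domain R"
proof (rule domainI[OF is_cring \<open>\<one> \<noteq> \<zero>\<close>])
  fix a b
  assume ab: "a \<otimes> b = \<zero>" and a: "a \<in> carrier R" and b: "b \<in> carrier R"
  show "a = \<zero> \<or> b = \<zero>"
  proof (cases "annihilator R b = {\<zero>}")
    case True
    moreover have "a \<in> annihilator R b"
      using ab a b by (simp add: annihilator_def m_comm)
    ultimately show ?thesis by blast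
  next
    case False
    then have "annihilator R b = carrier R"
      using carrier_only annihilator_ideal[OF b] annihilator_factroid[OF b] by blast
    then show ?thesis
      using annihilator_eq_carrier_iff[OF b] by blast
  qed
qed

theorem proposition4p9:
  fixes R (structure)
  assumes "cring R" and "\<one>\<^bsub>R\<^esub> \<noteq> \<zero>\<^bsub>R\<^esub>"
  shows "domain R \<longleftrightarrow>
    {I. ideal I R \<and> I \<noteq> {\<zero>\<^bsub>R\<^esub>} \<and> factroid R I} = {carrier R}"
proof -
  interpret cring R by fact
  have "carrier R \<noteq> {\<zero>}"
    using assms(2) one_closed by blast
  then have "carrier R \<in> {I. ideal I R \<and> I \<noteq> {\<zero>} \<and> factroid R I}"
    using oneideal carrier_factroid by blast
  then show ?thesis
    using domain.nonzero_factroid_ideal_eq_carrier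
      domain_if_nonzero_factroid_ideals_eq_carrier[OF assms(2)] by blast
qed

end
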